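(* Consider any concurrent run of the Block-STM algorithm (described in the context) on a block of $n$ transactions. If at some time $T$ simultaneously $\mathit{execution\_idx}\ge n$, $\mathit{validation\_idx}\ge n$ and $\mathit{num\_active\_tasks}=0$, then all transactions $tx_0,\dots,tx_{n-1}$ are globally committed at time $T$.
   Context: Model: threads perform atomic operations that appear to take place in a single global order; a "time" is a point in this order. Locks protect per-transaction status and dependency sets. Problem. A block is a sequence of transactions $tx_0,\dots,tx_{n-1}$ ($n=\mathtt{BLOCK.size()}$), each a deterministic program reading and writing memory locations. Shared state. MVMemory: a map $\mathit{data}$ from pairs $(\text{location}, \text{txn index})$ to either (incarnation number, value) or a marker ESTIMATE; arrays $\mathit{last\_written\_locations}[j]$ and $\mathit{last\_read\_set}[j]$, each loaded/stored atomically. A version is $(j,i)$ (transaction index, incarnation number). Scheduler: atomic counters $\mathit{execution\_idx}=0$, $\mathit{validation\_idx}=0$, $\mathit{decrease\_cnt}=0$, $\mathit{num\_active\_tasks}=0$, flag $\mathit{done\_marker}=$false; per transaction $j$ a lock-protected $\mathit{txn\_status}[j]=(\text{incarnation},\text{status})$, initially $(0,\mathtt{READY\_TO\_EXECUTE})$, status $\in\{\mathtt{READY\_TO\_EXECUTE},\mathtt{EXECUTING},\mathtt{EXECUTED},\mathtt{ABORTING}\}$, and a lock-protected dependency set $\mathit{txn\_dependency}[j]$, initially empty. MVMemory operations. $\mathtt{read}(p,j)$: among entries $(p,k)$ with $k<j$ take the largest $k$; if none, return NOT_FOUND; if ESTIMATE return READ_ERROR with blocking index $k$; else OK with version and value.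 $\mathtt{record}((j,i),R,W)$: write $\mathit{data}[(p,j)]:=(i,v)$ for $(p,v)\in W$; remove entries $(p,j)$ for previously written locations not rewritten; update $\mathit{last\_written\_locations}[j]$; store $\mathit{last\_read\_set}[j]:=R$; return whether a location not previously written was written. $\mathtt{convert\_writes\_to\_estimates}(j)$ replaces all entries $(p,j)$, $p\in\mathit{last\_written\_locations}[j]$, by ESTIMATE. $\mathtt{validate\_read\_set}(j)$ re-reads each recorded location with $\mathtt{read}(p,j)$ and returns true iff each yields the same recorded version (NOT_FOUND for recorded $\bot$) and no READ_ERROR. VM.execute($j$) runs $tx_j$ locally, reading its own writes, otherwise calling $\mathtt{read}(p,j)$ (NOT_FOUND: read initial storage, record $(p,\bot)$; OK: record version; READ_ERROR: stop and return blocking index); returns read-set and write-set; it never writes shared memory. Scheduler. $\mathtt{decrease\_execution\_idx}(t)$/$\mathtt{decrease\_validation\_idx}(t)$ set the index to $\min(\text{index},t)$ then increment $\mathit{decrease\_cnt}$. $\mathtt{try\_incarnate}(k)$: if $k<n$ and status of $tx_k$ is $\mathtt{READY\_TO\_EXECUTE}$ with incarnation $i$, set $\mathtt{EXECUTING}$ and return $(k,i)$; else decrement $\mathit{num\_active\_tasks}$, return none. $\mathtt{next\_task}$: if $\mathit{validation\_idx}<\mathit{execution\_idx}$: if $\mathit{validation\_idx}\ge n$ call check_done, return none; else increment $\mathit{num\_active\_tasks}$, fetch-and-increment $\mathit{validation\_idx}$ getting $k$; if $k<n$ and $tx_k$'s status is $\mathtt{EXECUTED}$ with incarnation $i$ return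 validation task $(k,i)$, else decrement $\mathit{num\_active\_tasks}$, return none. Otherwise: if $\mathit{execution\_idx}\ge n$ call check_done, return none; else increment $\mathit{num\_active\_tasks}$, fetch-and-increment $\mathit{execution\_idx}$ getting $k$, return $\mathtt{try\_incarnate}(k)$. $\mathtt{check\_done}$: read $c:=\mathit{decrease\_cnt}$; if $\min(\mathit{execution\_idx},\mathit{validation\_idx})\ge n$, $\mathit{num\_active\_tasks}=0$ and $\mathit{decrease\_cnt}=c$, set $\mathit{done\_marker}:=$true. Execution task $(k,i)$: run VM.execute($k$). On READ_ERROR with blocking $b$: under lock of $\mathit{txn\_dependency}[b]$, if status of $tx_b$ is $\mathtt{EXECUTED}$, retry the execution immediately; else set $tx_k$'s status to $\mathtt{ABORTING}$, add $k$ to $\mathit{txn\_dependency}[b]$, release, decrement $\mathit{num\_active\_tasks}$. Otherwise $w:=\mathtt{record}(\dots)$; set status $\mathtt{EXECUTED}$; swap out $\mathit{txn\_dependency}[k]$; for each dependent $d$ set $\mathit{txn\_status}[d]:=(\text{incarnation}+1,\mathtt{READY\_TO\_EXECUTE})$, and if any, $\mathtt{decrease\_execution\_idx}$(min dependent); if $\mathit{validation\_idx}>k$: if $w$ then $\mathtt{decrease\_validation\_idx}(k)$ else return validation task $(k,i)$ to the caller without changing $\mathit{num\_active\_tasks}$; if no task returned, decrement $\mathit{num\_active\_tasks}$. Validation task $(k,i)$: if $\mathtt{validate\_read\_set}(k)$ is false and, under lock, $\mathit{txn\_status}[k]=(i,\mathtt{EXECUTED})$, set status $\mathtt{ABORTING}$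 (aborted). If aborted: convert writes of $k$ to ESTIMATE; set $\mathit{txn\_status}[k]:=(i+1,\mathtt{READY\_TO\_EXECUTE})$; $\mathtt{decrease\_validation\_idx}(k+1)$; if $\mathit{execution\_idx}>k$ and $\mathtt{try\_incarnate}(k)$ returns a version, return that execution task (without changing $\mathit{num\_active\_tasks}$). Otherwise decrement $\mathit{num\_active\_tasks}$. Each thread loops while $\mathit{done\_marker}$ is false, performing tasks in hand or obtained via next_task; it joins on exit. Intervals. Pre-validation of $tx_j$: from a fetch-and-increment of $\mathit{validation\_idx}$ returning $j$ until just before the corresponding decrement in next_task or just before the resulting validation task is returned. Execution of $(j,i)$: from setting $tx_j$'s status to $\mathtt{EXECUTING}$ (incarnation $i$) until abort via the dependency mechanism, or just before the final decrement of $\mathit{num\_active\_tasks}$ after it, or just before a validation task is returned from it. Validation of $(j,i)$: from handing the validation task to a thread until just before its final decrement of $\mathit{num\_active\_tasks}$ or just before it returns an execution task. Global commit index at time $T$: minimum of $\mathit{validation\_idx}$, all $j$ with status not $\mathtt{EXECUTED}$, indices with ongoing pre-validation, and indices of versions with ongoing execution or validation. $tx_0,\dots,tx_k$ are globally committed at $T$ if this index exceeds $k$. *)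

theory Defs
  imports Main
begin

text \<open>Transactions are deterministic programs over locations 'l and values 'v.
  A program reads a location (continuing with the value read), writes a
  location locally, or finishes.\<close>

datatype ('l, 'v) prog =
    Done
  | Read 'l "'v \<Rightarrow> ('l, 'v) prog"
  | Write 'l 'v "('l, 'v) prog"

type_synonym version = "nat \<times> nat"  (* (transaction index, incarnation number) *)

datatype 'v entry = Written nat 'v | Estimate

datatype 'v read_result = NotFound | OkRead version 'v | ReadError nat

datatype tstatus = Ready_To_Execute | Executing | Executed | Aborting

datatype task = ExecTask nat nat | ValTask nat nat

text \<open>Program counters of a thread, together with its local variables.\<close>

datatype ('l, 'v) pc =
    Loop "task option"                 (* main loop head, with the task in hand *)
  | Exited
  (* next_task *)
  | NT_ReadV
  | NT_ReadE nat
  | NTV_Check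
  | NTV_Inc
  | NTV_Fetch
  | NTV_Status nat
  | NTV_Dec nat
  | NTE_Check
  | NTE_Inc
  | NTE_Fetch
  | TI_NT nat                          (* try_incarnate called from next_task *)
  | TI_NT_Dec
  (* check_done *)
  | CD_Start
  | CD_E nat
  | CD_V nat nat
  | CD_A nat
  | CD_C nat
  | CD_Set
  (* execution task (k,i) *)
  | ExRun nat nat "('l, 'v) prog" "'l \<Rightarrow> 'v option" "('l \<times> version option) list"
  | EX_Lock nat nat nat
  | EX_CheckB nat nat nat
  | EX_Retry nat nat nat
  | EX_Abort nat nat nat
  | EX_AddDep nat nat
  | EX_Release nat
  | EX_DepDec
  | EX_Record nat nat "'l \<Rightarrow> 'v option" "('l \<times> version option) list"
  | EX_SetExecuted nat nat bool
  | EX_Swap nat nat bool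
  | EX_Resume nat nat bool "nat set" "nat set"
  | EX_DecE nat nat bool nat
  | EX_DecE_Cnt nat nat bool
  | EX_ReadV nat nat bool
  | EX_DecV nat nat
  | EX_DecV_Cnt nat nat
  | EX_FinalDec nat nat
  (* validation task (k,i) *)
  | VA_Load nat nat
  | VA_Read nat nat "('l \<times> version option) list"
  | VA_Lock nat nat
  | VA_Convert nat nat
  | VA_SetReady nat nat
  | VA_DecV nat nat
  | VA_DecV_Cnt nat nat
  | VA_ReadE nat nat
  | TI_V nat nat                       (* try_incarnate called from the validation task *)
  | VA_TIDec nat nat
  | VA_FinalDec nat nat

record ('l, 'v) bstate =
  exec_idx :: nat
  val_idx :: nat
  dec_cnt :: nat
  num_active :: int
  done_marker :: bool
  txn_status :: "nat \<Rightarrow> nat \<times> tstatus"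
  txn_dep :: "nat \<Rightarrow> nat set"
  dep_lock :: "nat \<Rightarrow> bool"
  mv_data :: "'l \<Rightarrow> nat \<Rightarrow> 'v entry option"
  last_written :: "nat \<Rightarrow> 'l set"
  last_read :: "nat \<Rightarrow> ('l \<times> version option) list"
  pcs :: "nat \<Rightarrow> ('l, 'v) pc"

definition init_state :: "('l, 'v) bstate" where
  "init_state = \<lparr> exec_idx = 0, val_idx = 0, dec_cnt = 0, num_active = 0,
     done_marker = False, txn_status = (\<lambda>_. (0, Ready_To_Execute)),
     txn_dep = (\<lambda>_. {}), dep_lock = (\<lambda>_. False), mv_data = (\<lambda>_ _. None),
     last_written = (\<lambda>_. {}), last_read = (\<lambda>_. []), pcs = (\<lambda>_. Loop None) \<rparr>"

subsection \<open>MVMemory operations\<close>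

definition mvread :: "('l \<Rightarrow> nat \<Rightarrow> 'v entry option) \<Rightarrow> 'l \<Rightarrow> nat \<Rightarrow> 'v read_result" where
  "mvread d p j =
     (if \<forall>k<j. d p k = None then NotFound
      else (let k = (GREATEST k. k < j \<and> d p k \<noteq> None) in
            case the (d p k) of Estimate \<Rightarrow> ReadError k | Written i v \<Rightarrow> OkRead (k, i) v))"


definition mv_record ::
  "nat \<Rightarrow> nat \<Rightarrow> ('l \<times> version option) list \<Rightarrow> ('l \<Rightarrow> 'v option) \<Rightarrow> ('l, 'v) bstate \<Rightarrow> ('l, 'v) bstate" where
  "mv_record j i R W s = s \<lparr>
     mv_data := (\<lambda>p k. if k = j then
                          (case W p of Some v \<Rightarrow> Some (Written i v)
                           | None \<Rightarrow> if p \<in> last_written s j then None else mv_data s p k)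
                        else mv_data s p k),
     last_written := (last_written s)(j := dom W),
     last_read := (last_read s)(j := R) \<rparr>"

definition wrote_new_location :: "nat \<Rightarrow> ('l \<Rightarrow> 'v option) \<Rightarrow> ('l, 'v) bstate \<Rightarrow> bool" where
  "wrote_new_location j W s = (\<not> dom W \<subseteq> last_written s j)"

definition convert_writes_to_estimates :: "nat \<Rightarrow> ('l, 'v) bstate \<Rightarrow> ('l, 'v) bstate" where
  "convert_writes_to_estimates j s = s \<lparr>
     mv_data := (\<lambda>p k. if k = j \<and> p \<in> last_written s j then Some Estimate else mv_data s p k) \<rparr>"

fun read_matches :: "version option \<Rightarrow> 'v read_result \<Rightarrow> bool" where
  "read_matches None r = (r = NotFound)"
| "read_matches (Some ver) r = (\<exists>v. r = OkRead ver v)"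

definition setpc :: "nat \<Rightarrow> ('l, 'v) pc \<Rightarrow> ('l, 'v) bstate \<Rightarrow> ('l, 'v) bstate" where
  "setpc t p s = s \<lparr> pcs := (pcs s)(t := p) \<rparr>"

definition add_active :: "int \<Rightarrow> ('l, 'v) bstate \<Rightarrow> ('l, 'v) bstate" where
  "add_active d s = s \<lparr> num_active := num_active s + d \<rparr>"

definition set_status :: "nat \<Rightarrow> nat \<times> tstatus \<Rightarrow> ('l, 'v) bstate \<Rightarrow> ('l, 'v) bstate" where
  "set_status k st s = s \<lparr> txn_status := (txn_status s)(k := st) \<rparr>"

text \<open>Parameters: n = BLOCK.size(), tx = the transactions, init = initial storage.\<close>

inductive tstep :: "nat \<Rightarrow> (nat \<Rightarrow> ('l, 'v) prog) \<Rightarrow> ('l \<Rightarrow> 'v) \<Rightarrow> nat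
                     \<Rightarrow> ('l, 'v) bstate \<Rightarrow> ('l, 'v) bstate \<Rightarrow> bool"
  for n :: nat and tx :: "nat \<Rightarrow> ('l, 'v) prog" and init :: "'l \<Rightarrow> 'v" and t :: nat where
  loop_done: "pcs s t = Loop tk \<Longrightarrow> done_marker s \<Longrightarrow> tstep n tx init t s (setpc t Exited s)"
| loop_none: "pcs s t = Loop None \<Longrightarrow> \<not> done_marker s \<Longrightarrow> tstep n tx init t s (setpc t NT_ReadV s)"
| loop_exec: "pcs s t = Loop (Some (ExecTask k i)) \<Longrightarrow> \<not> done_marker s \<Longrightarrow>
     tstep n tx init t s (setpc t (ExRun k i (tx k) Map.empty []) s)"
| loop_val: "pcs s t = Loop (Some (ValTask k i)) \<Longrightarrow> \<not> done_marker s \<Longrightarrow>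
     tstep n tx init t s (setpc t (VA_Load k i) s)"
  (* next_task *)
| nt_readv: "pcs s t = NT_ReadV \<Longrightarrow> tstep n tx init t s (setpc t (NT_ReadE (val_idx s)) s)"
| nt_reade: "pcs s t = NT_ReadE vi \<Longrightarrow>
     tstep n tx init t s (setpc t (if vi < exec_idx s then NTV_Check else NTE_Check) s)"
| ntv_check: "pcs s t = NTV_Check \<Longrightarrow>
     tstep n tx init t s (setpc t (if n \<le> val_idx s then CD_Start else NTV_Inc) s)"
| ntv_inc: "pcs s t = NTV_Inc \<Longrightarrow> tstep n tx init t s (setpc t NTV_Fetch (add_active 1 s))"
| ntv_fetch: "pcs s t = NTV_Fetch \<Longrightarrow>
     tstep n tx init t s (setpc t (if val_idx s < n then NTV_Status (val_idx s) else NTV_Dec (val_idx s))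
                           (s \<lparr> val_idx := val_idx s + 1 \<rparr>))"
| ntv_status_ok: "pcs s t = NTV_Status k \<Longrightarrow> txn_status s k = (i, Executed) \<Longrightarrow>
     tstep n tx init t s (setpc t (Loop (Some (ValTask k i))) s)"
| ntv_status_no: "pcs s t = NTV_Status k \<Longrightarrow> snd (txn_status s k) \<noteq> Executed \<Longrightarrow>
     tstep n tx init t s (setpc t (NTV_Dec k) s)"
| ntv_dec: "pcs s t = NTV_Dec k \<Longrightarrow> tstep n tx init t s (setpc t (Loop None) (add_active (-1) s))"
| nte_check: "pcs s t = NTE_Check \<Longrightarrow>
     tstep n tx init t s (setpc t (if n \<le> exec_idx s then CD_Start else NTE_Inc) s)"
| nte_inc: "pcs s t = NTE_Inc \<Longrightarrow> tstep n tx init t s (setpc t NTE_Fetch (add_active 1 s))"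
| nte_fetch: "pcs s t = NTE_Fetch \<Longrightarrow>
     tstep n tx init t s (setpc t (TI_NT (exec_idx s)) (s \<lparr> exec_idx := exec_idx s + 1 \<rparr>))"
| ti_nt_ok: "pcs s t = TI_NT k \<Longrightarrow> k < n \<Longrightarrow> txn_status s k = (i, Ready_To_Execute) \<Longrightarrow>
     tstep n tx init t s (setpc t (Loop (Some (ExecTask k i))) (set_status k (i, Executing) s))"
| ti_nt_fail: "pcs s t = TI_NT k \<Longrightarrow> \<not> (k < n \<and> snd (txn_status s k) = Ready_To_Execute) \<Longrightarrow>
     tstep n tx init t s (setpc t TI_NT_Dec s)"
| ti_nt_dec: "pcs s t = TI_NT_Dec \<Longrightarrow> tstep n tx init t s (setpc t (Loop None) (add_active (-1) s))"
  (* check_done *)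
| cd_start: "pcs s t = CD_Start \<Longrightarrow> tstep n tx init t s (setpc t (CD_E (dec_cnt s)) s)"
| cd_e: "pcs s t = CD_E c \<Longrightarrow> tstep n tx init t s (setpc t (CD_V c (exec_idx s)) s)"
| cd_v: "pcs s t = CD_V c e \<Longrightarrow>
     tstep n tx init t s (setpc t (if n \<le> min e (val_idx s) then CD_A c else Loop None) s)"
| cd_a: "pcs s t = CD_A c \<Longrightarrow>
     tstep n tx init t s (setpc t (if num_active s = 0 then CD_C c else Loop None) s)"
| cd_c: "pcs s t = CD_C c \<Longrightarrow>
     tstep n tx init t s (setpc t (if dec_cnt s = c then CD_Set else Loop None) s)"
| cd_set: "pcs s t = CD_Set \<Longrightarrow> tstep n tx init t s (setpc t (Loop None) (s \<lparr> done_marker := True \<rparr>))"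
  (* execution task: VM.execute *)
| ex_write: "pcs s t = ExRun k i (Write p v q) W R \<Longrightarrow>
     tstep n tx init t s (setpc t (ExRun k i q (W(p \<mapsto> v)) R) s)"
| ex_read_own: "pcs s t = ExRun k i (Read p f) W R \<Longrightarrow> W p = Some v \<Longrightarrow>
     tstep n tx init t s (setpc t (ExRun k i (f v) W R) s)"
| ex_read_nf: "pcs s t = ExRun k i (Read p f) W R \<Longrightarrow> W p = None \<Longrightarrow> mvread (mv_data s) p k = NotFound \<Longrightarrow>
     tstep n tx init t s (setpc t (ExRun k i (f (init p)) W (R @ [(p, None)])) s)"
| ex_read_ok: "pcs s t = ExRun k i (Read p f) W R \<Longrightarrow> W p = None \<Longrightarrow> mvread (mv_data s) p k = OkRead ver v \<Longrightarrow>
     tstep n tx init t s (setpc t (ExRun k i (f v) W (R @ [(p, Some ver)])) s)"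
| ex_read_err: "pcs s t = ExRun k i (Read p f) W R \<Longrightarrow> W p = None \<Longrightarrow> mvread (mv_data s) p k = ReadError b \<Longrightarrow>
     tstep n tx init t s (setpc t (EX_Lock k i b) s)"
  (* READ_ERROR: dependency handling under the lock of txn_dependency[b] *)
| ex_lock: "pcs s t = EX_Lock k i b \<Longrightarrow> \<not> dep_lock s b \<Longrightarrow>
     tstep n tx init t s (setpc t (EX_CheckB k i b) (s \<lparr> dep_lock := (dep_lock s)(b := True) \<rparr>))"
| ex_checkb_retry: "pcs s t = EX_CheckB k i b \<Longrightarrow> snd (txn_status s b) = Executed \<Longrightarrow>
     tstep n tx init t s (setpc t (EX_Retry k i b) s)"
| ex_checkb_abort: "pcs s t = EX_CheckB k i b \<Longrightarrow> snd (txn_status s b) \<noteq> Executed \<Longrightarrow>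
     tstep n tx init t s (setpc t (EX_Abort k i b) s)"
| ex_retry: "pcs s t = EX_Retry k i b \<Longrightarrow>
     tstep n tx init t s (setpc t (ExRun k i (tx k) Map.empty []) (s \<lparr> dep_lock := (dep_lock s)(b := False) \<rparr>))"
| ex_abort: "pcs s t = EX_Abort k i b \<Longrightarrow>
     tstep n tx init t s (setpc t (EX_AddDep k b) (set_status k (fst (txn_status s k), Aborting) s))"
| ex_adddep: "pcs s t = EX_AddDep k b \<Longrightarrow>
     tstep n tx init t s (setpc t (EX_Release b) (s \<lparr> txn_dep := (txn_dep s)(b := insert k (txn_dep s b)) \<rparr>))"
| ex_release: "pcs s t = EX_Release b \<Longrightarrow>
     tstep n tx init t s (setpc t EX_DepDec (s \<lparr> dep_lock := (dep_lock s)(b := False) \<rparr>))"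
| ex_depdec: "pcs s t = EX_DepDec \<Longrightarrow> tstep n tx init t s (setpc t (Loop None) (add_active (-1) s))"
  (* successful execution: record and finish_execution *)
| ex_done: "pcs s t = ExRun k i Done W R \<Longrightarrow> tstep n tx init t s (setpc t (EX_Record k i W R) s)"
| ex_record: "pcs s t = EX_Record k i W R \<Longrightarrow>
     tstep n tx init t s (setpc t (EX_SetExecuted k i (wrote_new_location k W s)) (mv_record k i R W s))"
| ex_setexec: "pcs s t = EX_SetExecuted k i w \<Longrightarrow>
     tstep n tx init t s (setpc t (EX_Swap k i w) (set_status k (i, Executed) s))"
| ex_swap: "pcs s t = EX_Swap k i w \<Longrightarrow> \<not> dep_lock s k \<Longrightarrow>
     tstep n tx init t s (setpc t (EX_Resume k i w (txn_dep s k) (txn_dep s k))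
                           (s \<lparr> txn_dep := (txn_dep s)(k := {}) \<rparr>))"
| ex_resume: "pcs s t = EX_Resume k i w D A \<Longrightarrow> d \<in> D \<Longrightarrow>
     tstep n tx init t s (setpc t (EX_Resume k i w (D - {d}) A)
                           (set_status d (fst (txn_status s d) + 1, Ready_To_Execute) s))"
| ex_resume_end: "pcs s t = EX_Resume k i w {} A \<Longrightarrow>
     tstep n tx init t s (setpc t (if A = {} then EX_ReadV k i w else EX_DecE k i w (Min A)) s)"
| ex_dece: "pcs s t = EX_DecE k i w m \<Longrightarrow>
     tstep n tx init t s (setpc t (EX_DecE_Cnt k i w) (s \<lparr> exec_idx := min (exec_idx s) m \<rparr>))"
| ex_dece_cnt: "pcs s t = EX_DecE_Cnt k i w \<Longrightarrow>
     tstep n tx init t s (setpc t (EX_ReadV k i w) (s \<lparr> dec_cnt := dec_cnt s + 1 \<rparr>))"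
| ex_readv: "pcs s t = EX_ReadV k i w \<Longrightarrow>
     tstep n tx init t s (setpc t (if k < val_idx s then (if w then EX_DecV k i else Loop (Some (ValTask k i)))
                                   else EX_FinalDec k i) s)"
| ex_decv: "pcs s t = EX_DecV k i \<Longrightarrow>
     tstep n tx init t s (setpc t (EX_DecV_Cnt k i) (s \<lparr> val_idx := min (val_idx s) k \<rparr>))"
| ex_decv_cnt: "pcs s t = EX_DecV_Cnt k i \<Longrightarrow>
     tstep n tx init t s (setpc t (EX_FinalDec k i) (s \<lparr> dec_cnt := dec_cnt s + 1 \<rparr>))"
| ex_finaldec: "pcs s t = EX_FinalDec k i \<Longrightarrow> tstep n tx init t s (setpc t (Loop None) (add_active (-1) s))"
| va_load: "pcs s t = VA_Load k i \<Longrightarrow> tstep n tx init t s (setpc t (VA_Read k i (last_read s k)) s)"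
| va_read_ok: "pcs s t = VA_Read k i ((p, r) # rest) \<Longrightarrow> read_matches r (mvread (mv_data s) p k) \<Longrightarrow>
     tstep n tx init t s (setpc t (VA_Read k i rest) s)"
| va_read_bad: "pcs s t = VA_Read k i ((p, r) # rest) \<Longrightarrow> \<not> read_matches r (mvread (mv_data s) p k) \<Longrightarrow>
     tstep n tx init t s (setpc t (VA_Lock k i) s)"
| va_valid: "pcs s t = VA_Read k i [] \<Longrightarrow> tstep n tx init t s (setpc t (VA_FinalDec k i) s)"
| va_lock_abort: "pcs s t = VA_Lock k i \<Longrightarrow> txn_status s k = (i, Executed) \<Longrightarrow>
     tstep n tx init t s (setpc t (VA_Convert k i) (set_status k (i, Aborting) s))"
| va_lock_no: "pcs s t = VA_Lock k i \<Longrightarrow> txn_status s k \<noteq> (i, Executed) \<Longrightarrow>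
     tstep n tx init t s (setpc t (VA_FinalDec k i) s)"
| va_convert: "pcs s t = VA_Convert k i \<Longrightarrow>
     tstep n tx init t s (setpc t (VA_SetReady k i) (convert_writes_to_estimates k s))"
| va_setready: "pcs s t = VA_SetReady k i \<Longrightarrow>
     tstep n tx init t s (setpc t (VA_DecV k i) (set_status k (i + 1, Ready_To_Execute) s))"
| va_decv: "pcs s t = VA_DecV k i \<Longrightarrow>
     tstep n tx init t s (setpc t (VA_DecV_Cnt k i) (s \<lparr> val_idx := min (val_idx s) (k + 1) \<rparr>))"
| va_decv_cnt: "pcs s t = VA_DecV_Cnt k i \<Longrightarrow>
     tstep n tx init t s (setpc t (VA_ReadE k i) (s \<lparr> dec_cnt := dec_cnt s + 1 \<rparr>))"
| va_reade: "pcs s t = VA_ReadE k i \<Longrightarrow>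
     tstep n tx init t s (setpc t (if k < exec_idx s then TI_V k i else VA_FinalDec k i) s)"
| ti_v_ok: "pcs s t = TI_V k i \<Longrightarrow> k < n \<Longrightarrow> txn_status s k = (j, Ready_To_Execute) \<Longrightarrow>
     tstep n tx init t s (setpc t (Loop (Some (ExecTask k j))) (set_status k (j, Executing) s))"
| ti_v_fail: "pcs s t = TI_V k i \<Longrightarrow> \<not> (k < n \<and> snd (txn_status s k) = Ready_To_Execute) \<Longrightarrow>
     tstep n tx init t s (setpc t (VA_TIDec k i) s)"
| va_tidec: "pcs s t = VA_TIDec k i \<Longrightarrow> tstep n tx init t s (setpc t (Loop None) (add_active (-1) s))"
| va_finaldec: "pcs s t = VA_FinalDec k i \<Longrightarrow> tstep n tx init t s (setpc t (Loop None) (add_active (-1) s))"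

definition bstep :: "nat \<Rightarrow> (nat \<Rightarrow> ('l, 'v) prog) \<Rightarrow> ('l \<Rightarrow> 'v) \<Rightarrow> nat
                     \<Rightarrow> ('l, 'v) bstate \<Rightarrow> ('l, 'v) bstate \<Rightarrow> bool" where
  "bstep n tx init m s s' = (\<exists>t<m. tstep n tx init t s s')"

subsection \<open>Ongoing intervals and the global commit index\<close>

fun prevalidation :: "('l, 'v) pc \<Rightarrow> nat option" where
  "prevalidation (NTV_Status k) = Some k"
| "prevalidation (NTV_Dec k) = Some k"
| "prevalidation _ = None"

fun ongoing_execution :: "('l, 'v) pc \<Rightarrow> version option" where
  "ongoing_execution (Loop (Some (ExecTask k i))) = Some (k, i)"
| "ongoing_execution (ExRun k i _ _ _) = Some (k, i)"
| "ongoing_execution (EX_Lock k i _) = Some (k, i)"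
| "ongoing_execution (EX_CheckB k i _) = Some (k, i)"
| "ongoing_execution (EX_Retry k i _) = Some (k, i)"
| "ongoing_execution (EX_Abort k i _) = Some (k, i)"
| "ongoing_execution (EX_Record k i _ _) = Some (k, i)"
| "ongoing_execution (EX_SetExecuted k i _) = Some (k, i)"
| "ongoing_execution (EX_Swap k i _) = Some (k, i)"
| "ongoing_execution (EX_Resume k i _ _ _) = Some (k, i)"
| "ongoing_execution (EX_DecE k i _ _) = Some (k, i)"
| "ongoing_execution (EX_DecE_Cnt k i _) = Some (k, i)"
| "ongoing_execution (EX_ReadV k i _) = Some (k, i)"
| "ongoing_execution (EX_DecV k i) = Some (k, i)"
| "ongoing_execution (EX_DecV_Cnt k i) = Some (k, i)"
| "ongoing_execution (EX_FinalDec k i) = Some (k, i)"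
| "ongoing_execution _ = None"

fun ongoing_validation :: "('l, 'v) pc \<Rightarrow> version option" where
  "ongoing_validation (Loop (Some (ValTask k i))) = Some (k, i)"
| "ongoing_validation (VA_Load k i) = Some (k, i)"
| "ongoing_validation (VA_Read k i _) = Some (k, i)"
| "ongoing_validation (VA_Lock k i) = Some (k, i)"
| "ongoing_validation (VA_Convert k i) = Some (k, i)"
| "ongoing_validation (VA_SetReady k i) = Some (k, i)"
| "ongoing_validation (VA_DecV k i) = Some (k, i)"
| "ongoing_validation (VA_DecV_Cnt k i) = Some (k, i)"
| "ongoing_validation (VA_ReadE k i) = Some (k, i)"
| "ongoing_validation (TI_V k i) = Some (k, i)"
| "ongoing_validation (VA_TIDec k i) = Some (k, i)"
| "ongoing_validation (VA_FinalDec k i) = Some (k, i)"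
| "ongoing_validation _ = None"

definition commit_index :: "nat \<Rightarrow> nat \<Rightarrow> ('l, 'v) bstate \<Rightarrow> nat" where
  "commit_index n m s = Min ({val_idx s}
      \<union> {j. j < n \<and> snd (txn_status s j) \<noteq> Executed}
      \<union> {j. \<exists>t<m. prevalidation (pcs s t) = Some j}
      \<union> {j. \<exists>t<m. \<exists>i. ongoing_execution (pcs s t) = Some (j, i)}
      \<union> {j. \<exists>t<m. \<exists>i. ongoing_validation (pcs s t) = Some (j, i)})"

definition globally_committed :: "nat \<Rightarrow> nat \<Rightarrow> ('l, 'v) bstate \<Rightarrow> nat \<Rightarrow> bool" where
  "globally_committed n m s k = (k < commit_index n m s)"

end

theory Submission
  imports Defs
begin

(* Every obligation that keeps a transaction below n from being committed is owned by a thread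
   that is inside a task, i.e. counted in num_active: a READY transaction below execution_idx by a
   thread that will lower execution_idx or incarnate it, an EXECUTING one by its executor, and an
   ABORTING one by a thread about to resolve the abort or by the dependency set of a lower
   transaction b, which is then not yet EXECUTED or whose executor has yet to resume its
   dependents.  Together with mutual exclusion of the dependency locks and the bound
   busy_count <= num_active this is an inductive invariant.  When num_active = 0 no thread is
   inside a task, so by induction on the index every transaction below n is EXECUTED, no interval
   is ongoing, and the commit index is validation_idx >= n. *)

(* Between the increment of num_active and the matching decrement.  A thread that leaves the
   main loop with a task in hand never decrements, so num_active may exceed the busy count. *)
fun busy :: "('l, 'v) pc \<Rightarrow> bool" where
  "busy (Loop None) = False"
| "busy Exited = False"
| "busy NT_ReadV = False"
| "busy (NT_ReadE _) = False"
| "busy NTV_Check = False"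
| "busy NTV_Inc = False"
| "busy NTE_Check = False"
| "busy NTE_Inc = False"
| "busy CD_Start = False"
| "busy (CD_E _) = False"
| "busy (CD_V _ _) = False"
| "busy (CD_A _) = False"
| "busy (CD_C _) = False"
| "busy CD_Set = False"
| "busy _ = True"

(* The thread will lower execution_idx to at most j, or will itself try to incarnate j. *)
fun reschedules :: "nat \<Rightarrow> ('l, 'v) pc \<Rightarrow> bool" where
  "reschedules j (TI_NT k) = (k = j)"
| "reschedules j (EX_Resume k i w D A) = (j \<in> A)"
| "reschedules j (EX_DecE k i w x) = (x \<le> j)"
| "reschedules j (VA_DecV k i) = (k = j)"
| "reschedules j (VA_DecV_Cnt k i) = (k = j)"
| "reschedules j (VA_ReadE k i) = (k = j)"
| "reschedules j (TI_V k i) = (k = j)"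
| "reschedules j _ = False"

fun executes :: "nat \<Rightarrow> ('l, 'v) pc \<Rightarrow> bool" where
  "executes j (Loop (Some (ExecTask k i))) = (k = j)"
| "executes j (ExRun k i _ _ _) = (k = j)"
| "executes j (EX_Lock k i b) = (k = j)"
| "executes j (EX_CheckB k i b) = (k = j)"
| "executes j (EX_Retry k i b) = (k = j)"
| "executes j (EX_Abort k i b) = (k = j)"
| "executes j (EX_Record k i _ _) = (k = j)"
| "executes j (EX_SetExecuted k i _) = (k = j)"
| "executes j _ = False"

fun resolves_abort :: "nat \<Rightarrow> ('l, 'v) pc \<Rightarrow> bool" where
  "resolves_abort j (EX_AddDep k b) = (k = j)"
| "resolves_abort j (VA_Convert k i) = (k = j)"
| "resolves_abort j (VA_SetReady k i) = (k = j)"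
| "resolves_abort j (EX_Resume k i w D A) = (j \<in> D)"
| "resolves_abort j _ = False"

fun held_lock :: "('l, 'v) pc \<Rightarrow> nat option" where
  "held_lock (EX_CheckB k i b) = Some b"
| "held_lock (EX_Retry k i b) = Some b"
| "held_lock (EX_Abort k i b) = Some b"
| "held_lock (EX_AddDep k b) = Some b"
| "held_lock (EX_Release b) = Some b"
| "held_lock _ = None"

fun blocked_on :: "('l, 'v) pc \<Rightarrow> (nat \<times> nat) option" where
  "blocked_on (EX_Lock k i b) = Some (k, b)"
| "blocked_on (EX_CheckB k i b) = Some (k, b)"
| "blocked_on (EX_Retry k i b) = Some (k, b)"
| "blocked_on (EX_Abort k i b) = Some (k, b)"
| "blocked_on (EX_AddDep k b) = Some (k, b)"
| "blocked_on _ = None"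

fun aborting_on :: "('l, 'v) pc \<Rightarrow> nat option" where
  "aborting_on (EX_Abort k i b) = Some b"
| "aborting_on (EX_AddDep k b) = Some b"
| "aborting_on _ = None"

fun swapping :: "('l, 'v) pc \<Rightarrow> nat option" where
  "swapping (EX_Swap k i w) = Some k"
| "swapping _ = None"

fun resume_wf :: "('l, 'v) pc \<Rightarrow> bool" where
  "resume_wf (EX_Resume k i w D A) \<longleftrightarrow> finite A \<and> D \<subseteq> A"
| "resume_wf _ \<longleftrightarrow> True"

lemma idle_unobliged:
  assumes "\<not> busy p"
  shows "\<not> reschedules j p" "\<not> executes j p" "\<not> resolves_abort j p" "swapping p = None"
    and "prevalidation p = None" "ongoing_execution p = None" "ongoing_validation p = None"
  using assms by (induction p rule: busy.induct) auto

lemma busy_Loop [simp]: "busy (Loop tk) \<longleftrightarrow> tk \<noteq> None"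
  by (cases tk) auto

lemma executes_Loop [simp]: "executes j (Loop tk) \<longleftrightarrow> (\<exists>i. tk = Some (ExecTask j i))"
proof (cases tk)
  case (Some task)
  then show ?thesis by (cases task) auto
qed simp

definition some_thread :: "nat \<Rightarrow> (nat \<Rightarrow> ('l, 'v) pc) \<Rightarrow> (('l, 'v) pc \<Rightarrow> bool) \<Rightarrow> bool" where
  "some_thread m f Q \<longleftrightarrow> (\<exists>t<m. Q (f t))"

definition other_thread :: "nat \<Rightarrow> (nat \<Rightarrow> ('l, 'v) pc) \<Rightarrow> nat \<Rightarrow> (('l, 'v) pc \<Rightarrow> bool) \<Rightarrow> bool" where
  "other_thread m f t Q \<longleftrightarrow> (\<exists>u<m. u \<noteq> t \<and> Q (f u))"

lemma other_thread_fun_upd [simp]: "other_thread m (f(t := p)) t Q = other_thread m f t Q"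
  unfolding other_thread_def by auto

lemma some_thread_split: "t < m \<Longrightarrow> some_thread m f Q \<longleftrightarrow> Q (f t) \<or> other_thread m f t Q"
  unfolding some_thread_def other_thread_def by auto

definition busy_count :: "nat \<Rightarrow> (nat \<Rightarrow> ('l, 'v) pc) \<Rightarrow> int" where
  "busy_count m f = int (card {t. t < m \<and> busy (f t)})"

lemma busy_count_fun_upd:
  assumes "t < m"
  shows "busy_count m (f(t := p)) =
    busy_count m f - (if busy (f t) then 1 else 0) + (if busy p then 1 else 0)"
proof -
  let ?R = "{u. u < m \<and> u \<noteq> t \<and> busy (f u)}"
  have "{u. u < m \<and> busy (g u)} = (if busy (g t) then insert t ?R else ?R)"
    if "\<forall>u\<noteq>t. g u = f u" for g
    using assms that by auto
  from this[of f] this[of "f(t := p)"] show ?thesis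
    by (simp add: busy_count_def)
qed

lemmas bstate_update_defs =
  setpc_def add_active_def set_status_def mv_record_def convert_writes_to_estimates_def

lemma num_active_surplus_mono:
  assumes "tstep n tx init t s s'" "t < m"
  shows "num_active s - busy_count m (pcs s) \<le> num_active s' - busy_count m (pcs s')"
  using assms(1) by cases (auto simp: busy_count_fun_upd[OF assms(2)] bstate_update_defs)

lemma mvread_ReadError_less:
  assumes "mvread d p j = ReadError b"
  shows "b < j"
proof -
  have written: "\<not> (\<forall>k<j. d p k = None)"
    using assms unfolding mvread_def by (cases "\<forall>k<j. d p k = None") auto
  let ?g = "GREATEST k. k < j \<and> d p k \<noteq> None"
  from written obtain k where "k < j \<and> d p k \<noteq> None" by auto
  then have "?g < j" by (metis (mono_tags, lifting) GreatestI_nat less_imp_le_nat)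
  moreover have "b = ?g" using assms written unfolding mvread_def Let_def
    by (auto split: entry.splits option.splits)
  ultimately show ?thesis by simp
qed

(* The dependents of b are still going to be resumed. *)
abbreviation wakeup_pending :: "nat \<Rightarrow> ('l, 'v) bstate \<Rightarrow> nat \<Rightarrow> bool" where
  "wakeup_pending m s b \<equiv>
     snd (txn_status s b) \<noteq> Executed \<or> some_thread m (pcs s) (\<lambda>p. swapping p = Some b)"

definition deps_finite :: "('l, 'v) bstate \<Rightarrow> bool" where
  "deps_finite s \<longleftrightarrow> (\<forall>b. finite (txn_dep s b))"

definition resumes_wf :: "nat \<Rightarrow> ('l, 'v) bstate \<Rightarrow> bool" where
  "resumes_wf m s \<longleftrightarrow> (\<forall>t<m. resume_wf (pcs s t))"

definition lock_holders :: "nat \<Rightarrow> (nat \<Rightarrow> ('l, 'v) pc) \<Rightarrow> nat \<Rightarrow> nat set" where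
  "lock_holders m f b = {t. t < m \<and> held_lock (f t) = Some b}"

definition locks_owned :: "nat \<Rightarrow> ('l, 'v) bstate \<Rightarrow> bool" where
  "locks_owned m s \<longleftrightarrow>
     (\<forall>b. if dep_lock s b then \<exists>t. lock_holders m (pcs s) b = {t}
          else lock_holders m (pcs s) b = {})"

definition blockers_below :: "nat \<Rightarrow> ('l, 'v) bstate \<Rightarrow> bool" where
  "blockers_below m s \<longleftrightarrow>
     (\<forall>t<m. \<forall>k b. blocked_on (pcs s t) = Some (k, b) \<longrightarrow> b < k) \<and>
     (\<forall>b j. j \<in> txn_dep s b \<longrightarrow> b < j)"

definition aborts_wakeup_pending :: "nat \<Rightarrow> ('l, 'v) bstate \<Rightarrow> bool" where
  "aborts_wakeup_pending m s \<longleftrightarrow>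
     (\<forall>t<m. \<forall>b. aborting_on (pcs s t) = Some b \<longrightarrow> wakeup_pending m s b)"

definition deps_wakeup_pending :: "nat \<Rightarrow> ('l, 'v) bstate \<Rightarrow> bool" where
  "deps_wakeup_pending m s \<longleftrightarrow> (\<forall>b. txn_dep s b \<noteq> {} \<longrightarrow> wakeup_pending m s b)"

definition busy_count_bound :: "nat \<Rightarrow> ('l, 'v) bstate \<Rightarrow> bool" where
  "busy_count_bound m s \<longleftrightarrow> busy_count m (pcs s) \<le> num_active s"

definition ready_scheduled :: "nat \<Rightarrow> nat \<Rightarrow> ('l, 'v) bstate \<Rightarrow> bool" where
  "ready_scheduled n m s \<longleftrightarrow> (\<forall>j<n. snd (txn_status s j) = Ready_To_Execute \<longrightarrow>
      exec_idx s \<le> j \<or> some_thread m (pcs s) (reschedules j))"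

definition executing_owned :: "nat \<Rightarrow> nat \<Rightarrow> ('l, 'v) bstate \<Rightarrow> bool" where
  "executing_owned n m s \<longleftrightarrow> (\<forall>j<n. snd (txn_status s j) = Executing \<longrightarrow>
      busy_count m (pcs s) < num_active s \<or> some_thread m (pcs s) (executes j))"

definition aborting_owned :: "nat \<Rightarrow> nat \<Rightarrow> ('l, 'v) bstate \<Rightarrow> bool" where
  "aborting_owned n m s \<longleftrightarrow> (\<forall>j<n. snd (txn_status s j) = Aborting \<longrightarrow>
      (\<exists>b. j \<in> txn_dep s b) \<or> some_thread m (pcs s) (resolves_abort j))"

definition block_stm_inv :: "nat \<Rightarrow> nat \<Rightarrow> ('l, 'v) bstate \<Rightarrow> bool" where
  "block_stm_inv n m s \<longleftrightarrow>
     deps_finite s \<and> resumes_wf m s \<and> locks_owned m s \<and> blockers_below m s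
     \<and> aborts_wakeup_pending m s \<and> deps_wakeup_pending m s \<and> busy_count_bound m s
     \<and> ready_scheduled n m s \<and> executing_owned n m s \<and> aborting_owned n m s"

lemma lock_holders_fun_upd:
  "t < m \<Longrightarrow> lock_holders m (f(t := p)) b =
     (if held_lock p = Some b then insert t (lock_holders m f b) else lock_holders m f b - {t})"
  unfolding lock_holders_def by auto

lemma locks_owned_keep:
  assumes "locks_owned m s" "pcs s' = (pcs s)(t := p)" "held_lock p = held_lock (pcs s t)"
    and "dep_lock s' = dep_lock s"
  shows "locks_owned m s'"
proof -
  have "lock_holders m (pcs s') = lock_holders m (pcs s)"
    using assms(2,3) by (intro ext) (auto simp: lock_holders_def)
  then show ?thesis using assms(1,4) by (simp add: locks_owned_def)
qed

lemma locks_owned_acquire: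
  assumes "locks_owned m s" "t < m" "pcs s' = (pcs s)(t := p)"
    and "held_lock (pcs s t) = None" "held_lock p = Some b" "\<not> dep_lock s b"
    and "dep_lock s' = (dep_lock s)(b := True)"
  shows "locks_owned m s'"
proof -
  have "lock_holders m (pcs s) b = {}" using assms(1,6) by (simp add: locks_owned_def)
  then have "lock_holders m (pcs s') b = {t}" using assms(2,3,5) by (simp add: lock_holders_fun_upd)
  moreover have "lock_holders m (pcs s') c = lock_holders m (pcs s) c" if "c \<noteq> b" for c
    using assms(2-5) that by (auto simp: lock_holders_def)
  ultimately show ?thesis using assms(1,7) unfolding locks_owned_def by auto
qed

lemma locks_owned_release:
  assumes "locks_owned m s" "t < m" "pcs s' = (pcs s)(t := p)"
    and "held_lock (pcs s t) = Some b" "held_lock p = None"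
    and "dep_lock s' = (dep_lock s)(b := False)"
  shows "locks_owned m s'"
proof -
  have "t \<in> lock_holders m (pcs s) b" using assms(2,4) by (simp add: lock_holders_def)
  then have "lock_holders m (pcs s) b = {t}" using assms(1) unfolding locks_owned_def
    by (metis empty_iff singletonD)
  then have "lock_holders m (pcs s') b = {}" using assms(2,3,5) by (simp add: lock_holders_fun_upd)
  moreover have "lock_holders m (pcs s') c = lock_holders m (pcs s) c" if "c \<noteq> b" for c
    using assms(2-5) that by (auto simp: lock_holders_def)
  ultimately show ?thesis using assms(1,6) unfolding locks_owned_def by auto
qed

lemma locks_owned_step:
  assumes "tstep n tx init t s s'" "t < m" "locks_owned m s"
  shows "locks_owned m s'"
  using assms(1)
proof cases
  case (ex_lock k i b)
  show ?thesis
    by (rule locks_owned_acquire[OF assms(3,2), where p = "pcs s' t" and b = b]) 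
      (use ex_lock in \<open>simp_all add: setpc_def\<close>)
next
  case (ex_retry k i b)
  show ?thesis
    by (rule locks_owned_release[OF assms(3,2), where p = "pcs s' t" and b = b]) 
      (use ex_retry in \<open>simp_all add: setpc_def\<close>)
next
  case (ex_release b)
  show ?thesis
    by (rule locks_owned_release[OF assms(3,2), where p = "pcs s' t" and b = b]) 
      (use ex_release in \<open>simp_all add: setpc_def\<close>)
qed (rule locks_owned_keep[OF assms(3), where t = t and p = "pcs s' t"];
     simp add: bstate_update_defs)+

lemma aborting_on_locked:
  assumes "locks_owned m s" "t < m" "aborting_on (pcs s t) = Some b"
  shows "dep_lock s b"
proof -
  have "held_lock (pcs s t) = Some b" using assms(3) by (cases "pcs s t") auto
  then have "t \<in> lock_holders m (pcs s) b" using assms(2) by (simp add: lock_holders_def)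
  then show ?thesis using assms(1) unfolding locks_owned_def by (metis empty_iff)
qed

lemma deps_finite_step:
  assumes "tstep n tx init t s s'" "deps_finite s"
  shows "deps_finite s'"
  using assms by cases (auto simp: bstate_update_defs deps_finite_def)

lemma resumes_wf_step:
  assumes "tstep n tx init t s s'" "t < m" "resumes_wf m s" "deps_finite s"
  shows "resumes_wf m s'"
proof -
  have "resume_wf (pcs s t)" using assms(2,3) by (simp add: resumes_wf_def)
  with assms show ?thesis by cases (auto simp: bstate_update_defs resumes_wf_def deps_finite_def)
qed

lemma blockers_below_step:
  assumes "tstep n tx init t s s'" "t < m" "blockers_below m s"
  shows "blockers_below m s'"
  using assms by cases (auto simp: bstate_update_defs blockers_below_def dest: mvread_ReadError_less)

lemma busy_count_bound_step:
  assumes "tstep n tx init t s s'" "t < m" "busy_count_bound m s"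
  shows "busy_count_bound m s'"
  using num_active_surplus_mono[OF assms(1,2)] assms(3) by (simp add: busy_count_bound_def)

lemma aborts_wakeup_pending_step:
  assumes "tstep n tx init t s s'" "t < m" "aborts_wakeup_pending m s" "locks_owned m s"
  shows "aborts_wakeup_pending m s'"
  using assms(1)
proof cases
  case (ex_swap k i w)
  \<comment> \<open>the swap needs lock k, which every thread aborting on k holds\<close>
  have "aborting_on (pcs s u) \<noteq> Some k" if "u < m" for u
    using aborting_on_locked[OF assms(4) that] ex_swap by auto
  with ex_swap show ?thesis using assms(2,3)
    by (auto simp: setpc_def aborts_wakeup_pending_def some_thread_split[OF assms(2)])
qed (use assms(2,3) in
    \<open>auto simp: bstate_update_defs aborts_wakeup_pending_def some_thread_split[OF assms(2)]\<close>)

lemma deps_wakeup_pending_step: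
  assumes "tstep n tx init t s s'" "t < m" "deps_wakeup_pending m s" "aborts_wakeup_pending m s"
  shows "deps_wakeup_pending m s'"
proof -
  have "wakeup_pending m s b" if "aborting_on (pcs s t) = Some b" for b
    using assms(2,4) that by (simp add: aborts_wakeup_pending_def)
  with assms show ?thesis
    by cases (auto simp: bstate_update_defs deps_wakeup_pending_def some_thread_split[OF assms(2)])
qed

lemma ready_scheduled_step:
  assumes "tstep n tx init t s s'" "t < m" "ready_scheduled n m s" "resumes_wf m s"
  shows "ready_scheduled n m s'"
proof -
  have "resume_wf (pcs s t)" using assms(2,4) by (simp add: resumes_wf_def)
  with assms show ?thesis
    by cases (auto simp: bstate_update_defs ready_scheduled_def some_thread_split[OF assms(2)])
qed

lemma executing_owned_step:
  assumes "tstep n tx init t s s'" "t < m" "executing_owned n m s" "busy_count_bound m s"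
  shows "executing_owned n m s'"
  using assms num_active_surplus_mono[OF assms(1,2)]
  by cases (auto simp: bstate_update_defs executing_owned_def busy_count_bound_def
      some_thread_split[OF assms(2)] busy_count_fun_upd[OF assms(2)])

lemma aborting_owned_step:
  assumes "tstep n tx init t s s'" "t < m" "aborting_owned n m s" "resumes_wf m s"
  shows "aborting_owned n m s'"
  using assms(1)
proof cases
  case (ex_adddep k b)
  then show ?thesis using assms(2,3)
    by (auto simp: setpc_def aborting_owned_def some_thread_split[OF assms(2)])
next
  case (ex_swap k i w)
  then show ?thesis using assms(2,3)
    by (auto simp: setpc_def aborting_owned_def some_thread_split[OF assms(2)])
next
  case (ex_resume k i w D A d)
  then show ?thesis using assms(2,3,4)
    by (auto simp: bstate_update_defs aborting_owned_def resumes_wf_def some_thread_split[OF assms(2)])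
qed (use assms(2,3) in
    \<open>auto simp: bstate_update_defs aborting_owned_def some_thread_split[OF assms(2)]\<close>)

lemma block_stm_inv_init: "block_stm_inv n m init_state"
  by (simp add: init_state_def block_stm_inv_def deps_finite_def resumes_wf_def locks_owned_def
      lock_holders_def blockers_below_def aborts_wakeup_pending_def deps_wakeup_pending_def
      busy_count_bound_def busy_count_def ready_scheduled_def executing_owned_def aborting_owned_def)

lemma block_stm_inv_step:
  assumes "block_stm_inv n m s" "bstep n tx init m s s'"
  shows "block_stm_inv n m s'"
proof -
  from assms(2) obtain t where t: "t < m" and step: "tstep n tx init t s s'"
    by (auto simp: bstep_def)
  show ?thesis
    using assms(1) unfolding block_stm_inv_def
    by (intro conjI deps_finite_step[OF step] resumes_wf_step[OF step t] locks_owned_step[OF step t]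
        blockers_below_step[OF step t] aborts_wakeup_pending_step[OF step t]
        deps_wakeup_pending_step[OF step t] busy_count_bound_step[OF step t]
        ready_scheduled_step[OF step t] executing_owned_step[OF step t] aborting_owned_step[OF step t])
      simp_all
qed

lemma block_stm_inv_reachable:
  "(bstep n tx init m)\<^sup>*\<^sup>* init_state s \<Longrightarrow> block_stm_inv n m s"
  by (induction rule: rtranclp_induct) (auto intro: block_stm_inv_init block_stm_inv_step)

lemma quiescent_not_busy:
  assumes "block_stm_inv n m s" "num_active s = 0" "t < m"
  shows "\<not> busy (pcs s t)"
proof -
  have "busy_count m (pcs s) \<le> 0"
    using assms(1,2) by (simp add: block_stm_inv_def busy_count_bound_def)
  then have "{u. u < m \<and> busy (pcs s u)} = {}" by (simp add: busy_count_def)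
  with assms(3) show ?thesis by blast
qed

lemma quiescent_all_executed:
  assumes inv: "block_stm_inv n m s" and "n \<le> exec_idx s" "num_active s = 0" "j < n"
  shows "snd (txn_status s j) = Executed"
  using \<open>j < n\<close>
proof (induction j rule: less_induct)
  case (less j)
  have idle: "\<not> busy (pcs s t)" if "t < m" for t
    using quiescent_not_busy[OF inv \<open>num_active s = 0\<close> that] .
  show ?case
  proof (cases "snd (txn_status s j)")
    case Ready_To_Execute
    moreover have "\<not> some_thread m (pcs s) (reschedules j)"
      using idle_unobliged(1)[OF idle] by (auto simp: some_thread_def)
    ultimately show ?thesis
      using inv less.prems \<open>n \<le> exec_idx s\<close> by (auto simp: block_stm_inv_def ready_scheduled_def)
  next
    case Executing
    moreover have "\<not> some_thread m (pcs s) (executes j)"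
      using idle_unobliged(2)[OF idle] by (auto simp: some_thread_def)
    moreover have "0 \<le> busy_count m (pcs s)" by (simp add: busy_count_def)
    ultimately show ?thesis
      using inv less.prems \<open>num_active s = 0\<close> by (auto simp: block_stm_inv_def executing_owned_def)
  next
    case Aborting
    moreover have "\<not> some_thread m (pcs s) (resolves_abort j)"
      using idle_unobliged(3)[OF idle] by (auto simp: some_thread_def)
    ultimately obtain b where b: "j \<in> txn_dep s b"
      using inv less.prems by (auto simp: block_stm_inv_def aborting_owned_def)
    then have "b < j" using inv by (auto simp: block_stm_inv_def blockers_below_def)
    then have "snd (txn_status s b) = Executed" using less.IH less.prems by simp
    moreover have "\<not> some_thread m (pcs s) (\<lambda>p. swapping p = Some b)"
      using idle_unobliged(4)[OF idle] by (auto simp: some_thread_def)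
    ultimately show ?thesis using b inv by (auto simp: block_stm_inv_def deps_wakeup_pending_def)
  qed simp
qed

lemma commit_index_quiescent:
  assumes "block_stm_inv n m s" "n \<le> exec_idx s" "num_active s = 0"
  shows "commit_index n m s = val_idx s"
proof -
  have idle: "\<not> busy (pcs s t)" if "t < m" for t
    using quiescent_not_busy[OF assms(1,3) that] .
  have "{j. j < n \<and> snd (txn_status s j) \<noteq> Executed} = {}"
    using quiescent_all_executed[OF assms] by blast
  moreover have "{j. \<exists>t<m. prevalidation (pcs s t) = Some j} = {}"
    and "{j. \<exists>t<m. \<exists>i. ongoing_execution (pcs s t) = Some (j, i)} = {}"
    and "{j. \<exists>t<m. \<exists>i. ongoing_validation (pcs s t) = Some (j, i)} = {}"
    using idle_unobliged(5-7)[OF idle] by auto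
  ultimately show ?thesis unfolding commit_index_def by (simp only: Un_empty_right) simp
qed

theorem mainTheorem2:
  fixes n m :: nat and tx :: "nat \<Rightarrow> ('l, 'v) prog" and init :: "'l \<Rightarrow> 'v"
    and s :: "('l, 'v) bstate"
  assumes "(bstep n tx init m)\<^sup>*\<^sup>* init_state s"
    and "n \<le> exec_idx s" and "n \<le> val_idx s" and "num_active s = 0"
  shows "\<forall>k<n. globally_committed n m s k"
proof -
  have "commit_index n m s = val_idx s"
    using commit_index_quiescent[OF block_stm_inv_reachable[OF assms(1)] assms(2,4)] .
  with assms(3) show ?thesis by (simp add: globally_committed_def)
qed

end
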